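(* Let $(S,\Delta,\mathbb{P})$ be a probability space, $(U,d)$ a separable metric space, $\mathfrak{X}$ the set of $U$-valued random variables on $S$, $\mathcal{I}$ an ideal on $\mathbb{N}$, and $\underline{X}=\{X_n\}$ a sequence in $\mathfrak{X}$. If $\mathfrak{B}$ is a compact subset of $(\mathfrak{X}^0,\rho)$ such that $\{n\in\mathbb{N}:X_n\in\mathfrak{B}\}\notin\mathcal{I}$, then $\Gamma^{r^s}_{\underline{X}}(\mathcal{I}^{\mathbb{P}})\neq\varnothing$ for every $r>0$.
   Context: The Ky Fan metric is $\rho(X,Y)=\inf\{\varepsilon>0:\mathbb{P}(d(X,Y)>\varepsilon)\leq\varepsilon\}$; $\mathfrak{X}^0$ is the set of equivalence classes of $\mathfrak{X}$ under almost sure equality, on which $\rho$ is a metric. An ideal on $\mathbb{N}$ is a family $\mathcal{I}\subseteq\mathcal{P}(\mathbb{N})$ with $\varnothing\in\mathcal{I}$, closed under finite unions and under subsets. $\Gamma^{r^s}_{\underline{X}}(\mathcal{I}^{\mathbb{P}})$ (strong rough $\mathcal{I}$-cluster points in probability) is the set of $Y\in\mathfrak{X}$ with $\{n:\mathbb{P}(d(X_n,Y)<r+\varepsilon)>1-\delta\}\notin\mathcal{I}$ for all $\varepsilon,\delta>0$. *)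

theory Defs
  imports "HOL-Probability.Probability"
begin

definition is_ideal :: "nat set set \<Rightarrow> bool" where
  "is_ideal I \<longleftrightarrow> {} \<in> I \<and> (\<forall>A\<in>I. \<forall>B\<in>I. A \<union> B \<in> I) \<and> (\<forall>A\<in>I. \<forall>B. B \<subseteq> A \<longrightarrow> B \<in> I)"

definition rvs :: "'a measure \<Rightarrow> ('a \<Rightarrow> 'b::metric_space) set" where
  "rvs M = borel_measurable M"

text \<open>Ky Fan metric (a pseudometric on random variables, a metric on a.s.-classes).\<close>
definition kyfan :: "'a measure \<Rightarrow> ('a \<Rightarrow> 'b::metric_space) \<Rightarrow> ('a \<Rightarrow> 'b) \<Rightarrow> real" where
  "kyfan M X Y = Inf {e. e > 0 \<and> measure M {s \<in> space M. dist (X s) (Y s) > e} \<le> e}"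

text \<open>Open sets of the Ky Fan topology on random variables; these are unions of a.s.-classes,
  so they correspond exactly to the open sets of the metric space of classes.\<close>
definition kyfan_open :: "'a measure \<Rightarrow> ('a \<Rightarrow> 'b::metric_space) set \<Rightarrow> bool" where
  "kyfan_open M A \<longleftrightarrow> A \<subseteq> rvs M \<and>
     (\<forall>X\<in>A. \<exists>e>0. \<forall>Y\<in>rvs M. kyfan M X Y < e \<longrightarrow> Y \<in> A)"

text \<open>Compactness (open-cover definition) w.r.t. the Ky Fan topology; compactness of a set
  B of representatives is compactness of the set of its a.s.-classes in the quotient.\<close>
definition kyfan_compact :: "'a measure \<Rightarrow> ('a \<Rightarrow> 'b::metric_space) set \<Rightarrow> bool" where
  "kyfan_compact M B \<longleftrightarrow> B \<subseteq> rvs M \<and>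
     (\<forall>\<C>. (\<forall>C\<in>\<C>. kyfan_open M C) \<and> B \<subseteq> \<Union>\<C> \<longrightarrow>
        (\<exists>\<F>\<subseteq>\<C>. finite \<F> \<and> B \<subseteq> \<Union>\<F>))"

definition strong_rough_I_cluster ::
  "'a measure \<Rightarrow> nat set set \<Rightarrow> real \<Rightarrow> (nat \<Rightarrow> 'a \<Rightarrow> 'b::metric_space) \<Rightarrow> ('a \<Rightarrow> 'b) set" where
  "strong_rough_I_cluster M I r X = {Y \<in> rvs M. \<forall>\<epsilon>>0. \<forall>\<delta>>0.
     {n. measure M {s \<in> space M. dist (X n s) (Y s) < r + \<epsilon>} > 1 - \<delta>} \<notin> I}"

end

theory Submission imports Defs begin

text \<open>Suppose no strong rough \<open>\<I>\<close>-cluster point exists. Then every \<open>Y \<in> \<B>\<close> has a Ky Fan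
  ball around it that the sequence visits only along a set of indices in \<open>\<I>\<close>: a small Ky Fan
  distance forces \<open>\<bbbP>(d(X\<^sub>n, Y) < r + \<epsilon>) > 1 - \<delta>\<close>. Finitely many of these balls cover the compact
  set \<open>\<B>\<close>, so the indices with \<open>X\<^sub>n \<in> \<B>\<close> lie in a finite union of sets of \<open>\<I>\<close>, a contradiction.\<close>

lemma borel_measurable_dist_separable:
  fixes X Y :: "'a \<Rightarrow> 'b::metric_space" and D :: "'b set"
  assumes D: "countable D" "closure D = UNIV"
    and X: "X \<in> borel_measurable M" and Y: "Y \<in> borel_measurable M"
  shows "(\<lambda>s. dist (X s) (Y s)) \<in> borel_measurable M"
  unfolding borel_measurable_iff_less
proof
  fix c :: real
  let ?U = "\<lambda>q a b. if a + b < c then (X -` ball q a \<inter> space M) \<inter> (Y -` ball q b \<inter> space M) else {}"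
  have eq: "{w \<in> space M. dist (X w) (Y w) < c} = (\<Union>q\<in>D. \<Union>a\<in>\<rat>. \<Union>b\<in>\<rat>. ?U q a b)"
  proof (intro set_eqI iffI)
    fix w assume w: "w \<in> {w \<in> space M. dist (X w) (Y w) < c}"
    define d where "d = dist (X w) (Y w)"
    define t where "t = (c - d) / 4"
    have t: "t > 0" using w by (auto simp: d_def t_def)
    obtain q where q: "q \<in> D" "dist q (X w) < t"
      using t closure_approachable D(2) by (metis UNIV_I)
    obtain a where a: "a \<in> \<rat>" "dist q (X w) < a" "a < t"
      using Rats_dense_in_real q(2) by blast
    obtain b where b: "b \<in> \<rat>" "d + t < b" "b < d + 2 * t"
      using Rats_dense_in_real[of "d + t" "d + 2 * t"] t by auto
    have "dist q (Y w) \<le> dist q (X w) + d"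
      unfolding d_def by (rule dist_triangle)
    moreover have "c = d + 4 * t"
      unfolding t_def by (simp add: field_simps)
    ultimately have "w \<in> ?U q a b"
      using w a b q by auto
    then show "w \<in> (\<Union>q\<in>D. \<Union>a\<in>\<rat>. \<Union>b\<in>\<rat>. ?U q a b)"
      using q(1) a(1) b(1) by blast
  next
    fix w assume "w \<in> (\<Union>q\<in>D. \<Union>a\<in>\<rat>. \<Union>b\<in>\<rat>. ?U q a b)"
    then obtain q a b where "a + b < c" "w \<in> space M" "dist q (X w) < a" "dist q (Y w) < b"
      by (auto split: if_splits)
    moreover have "dist (X w) (Y w) \<le> dist q (X w) + dist q (Y w)"
      by (rule dist_triangle3)
    ultimately show "w \<in> {w \<in> space M. dist (X w) (Y w) < c}"
      by auto
  qed
  have "X -` ball q a \<inter> space M \<in> sets M" "Y -` ball q a \<inter> space M \<in> sets M" for q a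
    using X Y by (simp_all add: measurable_sets)
  then show "{w \<in> space M. dist (X w) (Y w) < c} \<in> sets M"
    unfolding eq using D(1) countable_rat by (intro sets.countable_UN'') auto
qed

lemma is_ideal_finite_UN:
  assumes "is_ideal I" "finite F" "\<And>Y. Y \<in> F \<Longrightarrow> A Y \<in> I"
  shows "(\<Union>Y\<in>F. A Y) \<in> I"
  using assms(2,3)
proof (induction F rule: finite_induct)
  case empty
  then show ?case using assms(1) by (simp add: is_ideal_def)
next
  case (insert Y F)
  then show ?case using assms(1) unfolding is_ideal_def by simp
qed

lemma is_ideal_subset: "is_ideal I \<Longrightarrow> B \<subseteq> A \<Longrightarrow> A \<in> I \<Longrightarrow> B \<in> I"
  unfolding is_ideal_def by blast

lemma kyfan_commute: "kyfan M X Y = kyfan M Y X"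
  unfolding kyfan_def by (simp add: dist_commute)

context prob_space
begin

lemma kyfan_less_iff:
  "kyfan M X Y < e \<longleftrightarrow> (\<exists>a>0. a < e \<and> prob {s \<in> space M. a < dist (X s) (Y s)} \<le> a)"
proof -
  define S where "S = {a. a > 0 \<and> prob {s \<in> space M. a < dist (X s) (Y s)} \<le> a}"
  have "1 \<in> S"
    by (simp add: S_def)
  moreover have "bdd_below S"
    by (rule bdd_belowI[of _ 0]) (simp add: S_def)
  ultimately have "Inf S < e \<longleftrightarrow> (\<exists>a\<in>S. a < e)"
    by (intro cInf_less_iff) auto
  then show ?thesis
    unfolding kyfan_def S_def by auto
qed

lemma kyfan_self: "kyfan M X X = 0"
proof -
  have "{s \<in> space M. e < dist (X s) (X s)} = {}" if "e > 0" for e :: real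
    using that by simp
  then have "{e. 0 < e \<and> prob {s \<in> space M. e < dist (X s) (X s)} \<le> e} = {0<..}"
    by auto
  then show ?thesis
    unfolding kyfan_def by simp
qed

context
  fixes D :: "'b::metric_space set"
  assumes separable: "countable D" "closure D = UNIV"
begin

lemma sets_dist_greater:
  fixes X Y :: "'a \<Rightarrow> 'b"
  assumes "X \<in> rvs M" "Y \<in> rvs M"
  shows "{s \<in> space M. a < dist (X s) (Y s)} \<in> events"
  using borel_measurable_dist_separable[OF separable, of X M Y] assms
  unfolding rvs_def borel_measurable_iff_greater by blast

lemma sets_dist_less:
  fixes X Y :: "'a \<Rightarrow> 'b"
  assumes "X \<in> rvs M" "Y \<in> rvs M"
  shows "{s \<in> space M. dist (X s) (Y s) < a} \<in> events"
  using borel_measurable_dist_separable[OF separable, of X M Y] assms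
  unfolding rvs_def borel_measurable_iff_less by blast

lemma prob_dist_less_ge_one_minus:
  fixes X Y :: "'a \<Rightarrow> 'b"
  assumes "X \<in> rvs M" "Y \<in> rvs M" "a < e"
  shows "1 - prob {s \<in> space M. a < dist (X s) (Y s)} \<le> prob {s \<in> space M. dist (X s) (Y s) < e}"
proof -
  have "space M - {s \<in> space M. a < dist (X s) (Y s)} \<subseteq> {s \<in> space M. dist (X s) (Y s) < e}"
    using assms(3) by auto
  moreover have "{s \<in> space M. dist (X s) (Y s) < e} \<in> events"
    by (rule sets_dist_less[OF assms(1,2)])
  ultimately have "prob (space M - {s \<in> space M. a < dist (X s) (Y s)})
      \<le> prob {s \<in> space M. dist (X s) (Y s) < e}"
    by (rule finite_measure_mono)
  then show ?thesis
    using prob_compl[OF sets_dist_greater[OF assms(1,2)]] by simp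
qed

lemma prob_dist_greater_add_le:
  fixes X Y Z :: "'a \<Rightarrow> 'b"
  assumes "X \<in> rvs M" "Y \<in> rvs M" "Z \<in> rvs M"
  shows "prob {s \<in> space M. a + b < dist (X s) (Z s)}
    \<le> prob {s \<in> space M. a < dist (X s) (Y s)} + prob {s \<in> space M. b < dist (Y s) (Z s)}"
proof -
  have "{s \<in> space M. a + b < dist (X s) (Z s)}
      \<subseteq> {s \<in> space M. a < dist (X s) (Y s)} \<union> {s \<in> space M. b < dist (Y s) (Z s)}"
  proof safe
    fix s assume "s \<in> space M" "a + b < dist (X s) (Z s)" "\<not> b < dist (Y s) (Z s)"
    then show "a < dist (X s) (Y s)"
      using dist_triangle[of "X s" "Z s" "Y s"] by linarith
  qed
  then have "prob {s \<in> space M. a + b < dist (X s) (Z s)}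
      \<le> prob ({s \<in> space M. a < dist (X s) (Y s)} \<union> {s \<in> space M. b < dist (Y s) (Z s)})"
    using sets_dist_greater assms by (intro finite_measure_mono) auto
  also have "\<dots> \<le> prob {s \<in> space M. a < dist (X s) (Y s)} + prob {s \<in> space M. b < dist (Y s) (Z s)}"
    using sets_dist_greater assms by (intro measure_Un_le) auto
  finally show ?thesis .
qed

lemma kyfan_triangle:
  fixes X Y Z :: "'a \<Rightarrow> 'b"
  assumes "X \<in> rvs M" "Y \<in> rvs M" "Z \<in> rvs M"
  shows "kyfan M X Z \<le> kyfan M X Y + kyfan M Y Z"
proof (rule field_le_epsilon)
  fix e :: real assume "e > 0"
  then have "kyfan M X Y < kyfan M X Y + e / 2" "kyfan M Y Z < kyfan M Y Z + e / 2"
    by simp_all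
  then obtain a b where a: "a > 0" "a < kyfan M X Y + e / 2" "prob {s \<in> space M. a < dist (X s) (Y s)} \<le> a"
    and b: "b > 0" "b < kyfan M Y Z + e / 2" "prob {s \<in> space M. b < dist (Y s) (Z s)} \<le> b"
    unfolding kyfan_less_iff by blast
  then have "prob {s \<in> space M. a + b < dist (X s) (Z s)} \<le> a + b"
    using prob_dist_greater_add_le[OF assms, of a b] by linarith
  then have "kyfan M X Z < kyfan M X Y + kyfan M Y Z + e"
    using a b by (subst kyfan_less_iff) (auto intro!: exI[of _ "a + b"])
  then show "kyfan M X Z \<le> kyfan M X Y + kyfan M Y Z + e"
    by simp
qed

lemma kyfan_cong_AE:
  fixes X Y Y' :: "'a \<Rightarrow> 'b"
  assumes "X \<in> rvs M" "Y \<in> rvs M" "Y' \<in> rvs M" and "AE s in M. Y s = Y' s"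
  shows "kyfan M X Y = kyfan M X Y'"
proof -
  have "prob {s \<in> space M. a < dist (X s) (Y s)} = prob {s \<in> space M. a < dist (X s) (Y' s)}" for a
  proof (rule measure_eq_AE)
    show "AE s in M. s \<in> {s \<in> space M. a < dist (X s) (Y s)} \<longleftrightarrow> s \<in> {s \<in> space M. a < dist (X s) (Y' s)}"
      using assms(4) by eventually_elim auto
  qed (use sets_dist_greater assms in auto)
  then show ?thesis
    unfolding kyfan_def by simp
qed

lemma kyfan_open_ball:
  fixes Y :: "'a \<Rightarrow> 'b"
  assumes "Y \<in> rvs M"
  shows "kyfan_open M {Z \<in> rvs M. kyfan M Z Y < e}"
  unfolding kyfan_open_def
proof (intro conjI ballI)
  fix Z assume Z: "Z \<in> {Z \<in> rvs M. kyfan M Z Y < e}"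
  show "\<exists>e'>0. \<forall>W\<in>rvs M. kyfan M Z W < e' \<longrightarrow> W \<in> {Z \<in> rvs M. kyfan M Z Y < e}"
  proof (intro exI[of _ "e - kyfan M Z Y"] conjI ballI impI)
    fix W assume "W \<in> rvs M" "kyfan M Z W < e - kyfan M Z Y"
    moreover have "kyfan M W Y \<le> kyfan M W Z + kyfan M Z Y"
      using Z by (intro kyfan_triangle \<open>W \<in> rvs M\<close> assms) simp
    ultimately show "W \<in> {Z \<in> rvs M. kyfan M Z Y < e}"
      by (simp add: kyfan_commute)
  qed (use Z in simp)
qed blast

lemma kyfan_compact_indices_in_ideal:
  fixes X :: "nat \<Rightarrow> 'a \<Rightarrow> 'b" and B :: "('a \<Rightarrow> 'b) set"
  assumes I: "is_ideal I" and X: "\<And>n. X n \<in> rvs M" and B: "kyfan_compact M B"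
    and small: "\<And>Y. Y \<in> B \<Longrightarrow> \<exists>e>0. {n. kyfan M (X n) Y < e} \<in> I"
  shows "{n. \<exists>Y\<in>B. AE s in M. X n s = Y s} \<in> I"
proof -
  have "\<forall>Y\<in>B. \<exists>e>0. {n. kyfan M (X n) Y < e} \<in> I"
    using small by blast
  then obtain e where e: "\<And>Y. Y \<in> B \<Longrightarrow> e Y > 0 \<and> {n. kyfan M (X n) Y < e Y} \<in> I"
    unfolding bchoice_iff by blast
  define nbhd where "nbhd Y = {Z \<in> rvs M. kyfan M Z Y < e Y}" for Y
  have B_rvs: "B \<subseteq> rvs M"
    using B unfolding kyfan_compact_def by blast
  have "Y \<in> nbhd Y" if "Y \<in> B" for Y
    using that e[OF that] B_rvs kyfan_self[of Y] unfolding nbhd_def by auto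
  then have "B \<subseteq> \<Union>(nbhd ` B)"
    by blast
  moreover have "kyfan_open M (nbhd Y)" if "Y \<in> B" for Y
    unfolding nbhd_def using that B_rvs by (intro kyfan_open_ball) auto
  ultimately obtain G where G: "G \<subseteq> nbhd ` B" "finite G" "B \<subseteq> \<Union>G"
    using B[unfolded kyfan_compact_def, THEN conjunct2, rule_format, of "nbhd ` B"] by auto
  obtain F where F: "F \<subseteq> B" "finite F" "G = nbhd ` F"
    using finite_subset_image[OF G(2,1)] by blast
  have "{n. \<exists>Y\<in>B. AE s in M. X n s = Y s} \<subseteq> (\<Union>Y\<in>F. {n. kyfan M (X n) Y < e Y})"
  proof
    fix n assume "n \<in> {n. \<exists>Y\<in>B. AE s in M. X n s = Y s}"
    then obtain Z where Z: "Z \<in> B" "AE s in M. X n s = Z s"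
      by blast
    then obtain Y where Y: "Y \<in> F" "Z \<in> nbhd Y"
      using G(3) unfolding F(3) by blast
    have "kyfan M Y (X n) = kyfan M Y Z"
      using Z Y(1) F(1) B_rvs by (intro kyfan_cong_AE X) auto
    then have "kyfan M (X n) Y = kyfan M Z Y"
      by (metis kyfan_commute)
    with Y(2) have "kyfan M (X n) Y < e Y"
      unfolding nbhd_def by simp
    then show "n \<in> (\<Union>Y\<in>F. {n. kyfan M (X n) Y < e Y})"
      using Y(1) by blast
  qed
  moreover have "(\<Union>Y\<in>F. {n. kyfan M (X n) Y < e Y}) \<in> I"
    by (rule is_ideal_finite_UN[OF I F(2)]) (use e F(1) in blast)
  ultimately show ?thesis
    by (rule is_ideal_subset[OF I])
qed

lemma not_strong_rough_I_cluster_imp_kyfan_ball: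
  fixes X :: "nat \<Rightarrow> 'a \<Rightarrow> 'b" and Y :: "'a \<Rightarrow> 'b"
  assumes I: "is_ideal I" and X: "\<And>n. X n \<in> rvs M" and Y: "Y \<in> rvs M"
    and r: "r > 0" and not_cluster: "Y \<notin> strong_rough_I_cluster M I r X"
  shows "\<exists>e>0. {n. kyfan M (X n) Y < e} \<in> I"
proof -
  obtain \<epsilon> \<delta> where \<epsilon>\<delta>: "\<epsilon> > 0" "\<delta> > 0"
    and visits: "{n. prob {s \<in> space M. dist (X n s) (Y s) < r + \<epsilon>} > 1 - \<delta>} \<in> I"
    using not_cluster Y unfolding strong_rough_I_cluster_def by blast
  have "{n. kyfan M (X n) Y < min r \<delta>}
      \<subseteq> {n. prob {s \<in> space M. dist (X n s) (Y s) < r + \<epsilon>} > 1 - \<delta>}"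
  proof safe
    fix n assume "kyfan M (X n) Y < min r \<delta>"
    then obtain a where a: "a < r" "a < \<delta>" "prob {s \<in> space M. a < dist (X n s) (Y s)} \<le> a"
      unfolding kyfan_less_iff by auto
    have "a < r + \<epsilon>"
      using a(1) \<epsilon>\<delta> by simp
    then have "1 - prob {s \<in> space M. a < dist (X n s) (Y s)} \<le> prob {s \<in> space M. dist (X n s) (Y s) < r + \<epsilon>}"
      by (rule prob_dist_less_ge_one_minus[OF X Y])
    with a show "prob {s \<in> space M. dist (X n s) (Y s) < r + \<epsilon>} > 1 - \<delta>"
      by simp
  qed
  then show ?thesis
    using is_ideal_subset[OF I _ visits] r \<epsilon>\<delta> by (intro exI[of _ "min r \<delta>"]) auto
qed

end

end

theorem proposition3p9:
  fixes M :: "'a measure" and I :: "nat set set" and X :: "nat \<Rightarrow> 'a \<Rightarrow> 'b::metric_space"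
    and B :: "('a \<Rightarrow> 'b) set" and r :: real
  assumes "prob_space M"
    and "\<exists>D::'b set. countable D \<and> closure D = UNIV"
    and "is_ideal I"
    and "\<And>n. X n \<in> rvs M"
    and "kyfan_compact M B"
    and "{n. \<exists>Y\<in>B. AE s in M. X n s = Y s} \<notin> I"
    and "r > 0"
  shows "strong_rough_I_cluster M I r X \<noteq> {}"
proof
  assume no_cluster: "strong_rough_I_cluster M I r X = {}"
  interpret prob_space M by fact
  obtain D :: "'b set" where D: "countable D" "closure D = UNIV"
    using assms(2) by blast
  have "\<exists>e>0. {n. kyfan M (X n) Y < e} \<in> I" if "Y \<in> B" for Y
  proof (rule not_strong_rough_I_cluster_imp_kyfan_ball[OF D assms(3,4) _ assms(7)])
    show "Y \<in> rvs M"
      using that assms(5) unfolding kyfan_compact_def by blast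
    show "Y \<notin> strong_rough_I_cluster M I r X"
      using no_cluster by simp
  qed
  then have "{n. \<exists>Y\<in>B. AE s in M. X n s = Y s} \<in> I"
    by (rule kyfan_compact_indices_in_ideal[OF D assms(3,4,5)])
  with assms(6) show False ..
qed

end
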